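(* Let $d$ be a prime and let $\{M_i\}_{i=1}^{d+1}$ be a complete set of $d+1$ pairwise mutually unbiased orthonormal bases of $\mathbb{C}^d$. Assume the extended CQC (ECQC) conjecture holds for this set, i.e. for every state $\sigma_{AB}$ on $\mathbb{C}^d\otimes\mathbb{C}^d$, $$I(A:B)\ \ge\ \min_{\mathcal{S}\subseteq\{1,\dots,d+1\},\,|\mathcal{S}|=d}\ \sum_{i\in\mathcal{S}} I(M_i^A:M_i^B).$$ Then every state $\rho_{AB}$ on $\mathbb{C}^d\otimes\mathbb{C}^d$ satisfies $$\sum_{i=1}^{d+1}H(M_i^AM_i^B)\ \ge\ 2\big((d+1)(\log(d)-1)\big)-I(A:B)-I_{\max}(M^A:M^B),$$ where $I_{\max}(M^A:M^B)=\max_{1\le i\le d+1} I(M_i^A:M_i^B)$.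
   Context: All logarithms are base 2 and $0\log0=0$. Bases $\{|z_i\rangle\}$, $\{|x_j\rangle\}$ of $\mathbb{C}^d$ are mutually unbiased if $|\langle z_i|x_j\rangle|^2=1/d$ for all $i,j$. $H(AB)$, $H(A)$, $H(B)$ are von Neumann entropies of $\rho_{AB}$ and its marginals, $I(A:B)=H(A)+H(B)-H(AB)$. For a basis $M_i=\{|m_j\rangle\}$, $M_i^A,M_i^B$ are the classical outcomes when both parties measure their subsystem in $M_i$, with joint distribution $p(j,k)=\langle m_j\otimes m_k|\rho_{AB}|m_j\otimes m_k\rangle$; $H(M_i^AM_i^B)$ is its Shannon entropy and $I(M_i^A:M_i^B)=H(M_i^A)+H(M_i^B)-H(M_i^AM_i^B)$. *)

theory Defs
  imports "Jordan_Normal_Form.Jordan_Normal_Form" "Jordan_Normal_Form.Schur_Decomposition"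
    "HOL-Computational_Algebra.Polynomial"
begin

definition ent :: "real \<Rightarrow> real" where
  "ent x = (if x \<le> 0 then 0 else - x * log 2 x)"

definition density_matrix :: "nat \<Rightarrow> complex mat \<Rightarrow> bool" where
  "density_matrix n \<rho> \<longleftrightarrow> \<rho> \<in> carrier_mat n n \<and> mat_adjoint \<rho> = \<rho> \<and> (\<Sum>i<n. \<rho> $$ (i, i)) = 1 \<and>
     (\<forall>v \<in> carrier_vec n. Im ((\<rho> *\<^sub>v v) \<bullet>c v) = 0 \<and> Re ((\<rho> *\<^sub>v v) \<bullet>c v) \<ge> 0)"

definition vn_entropy :: "complex mat \<Rightarrow> real" where
  "vn_entropy A = sum_mset (image_mset (\<lambda>z. ent (Re z)) (proots (char_poly A)))"

(* Basis |j>|k> of C^d (x) C^d is indexed by j*d+k. *)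
definition ptrace_B :: "nat \<Rightarrow> complex mat \<Rightarrow> complex mat" where
  "ptrace_B d \<rho> = mat d d (\<lambda>(j, j'). \<Sum>k<d. \<rho> $$ (j*d+k, j'*d+k))"

definition ptrace_A :: "nat \<Rightarrow> complex mat \<Rightarrow> complex mat" where
  "ptrace_A d \<rho> = mat d d (\<lambda>(k, k'). \<Sum>j<d. \<rho> $$ (j*d+k, j*d+k'))"

definition qmi :: "nat \<Rightarrow> complex mat \<Rightarrow> real" where
  "qmi d \<rho> = vn_entropy (ptrace_B d \<rho>) + vn_entropy (ptrace_A d \<rho>) - vn_entropy \<rho>"

definition tensor_vec :: "nat \<Rightarrow> complex vec \<Rightarrow> complex vec \<Rightarrow> complex vec" where
  "tensor_vec d u w = vec (d*d) (\<lambda>n. u $ (n div d) * w $ (n mod d))"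

definition meas_prob :: "nat \<Rightarrow> complex mat \<Rightarrow> (nat \<Rightarrow> complex vec) \<Rightarrow> nat \<Rightarrow> nat \<Rightarrow> real" where
  "meas_prob d \<rho> b j k = Re ((\<rho> *\<^sub>v tensor_vec d (b j) (b k)) \<bullet>c tensor_vec d (b j) (b k))"

definition joint_meas_entropy :: "nat \<Rightarrow> complex mat \<Rightarrow> (nat \<Rightarrow> complex vec) \<Rightarrow> real" where
  "joint_meas_entropy d \<rho> b = (\<Sum>j<d. \<Sum>k<d. ent (meas_prob d \<rho> b j k))"

definition meas_entropy_A :: "nat \<Rightarrow> complex mat \<Rightarrow> (nat \<Rightarrow> complex vec) \<Rightarrow> real" where
  "meas_entropy_A d \<rho> b = (\<Sum>j<d. ent (\<Sum>k<d. meas_prob d \<rho> b j k))"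

definition meas_entropy_B :: "nat \<Rightarrow> complex mat \<Rightarrow> (nat \<Rightarrow> complex vec) \<Rightarrow> real" where
  "meas_entropy_B d \<rho> b = (\<Sum>k<d. ent (\<Sum>j<d. meas_prob d \<rho> b j k))"

definition classical_mi :: "nat \<Rightarrow> complex mat \<Rightarrow> (nat \<Rightarrow> complex vec) \<Rightarrow> real" where
  "classical_mi d \<rho> b = meas_entropy_A d \<rho> b + meas_entropy_B d \<rho> b - joint_meas_entropy d \<rho> b"

definition orthonormal_basis :: "nat \<Rightarrow> (nat \<Rightarrow> complex vec) \<Rightarrow> bool" where
  "orthonormal_basis d b \<longleftrightarrow> (\<forall>j<d. b j \<in> carrier_vec d) \<and>
     (\<forall>j<d. \<forall>k<d. b j \<bullet>c b k = (if j = k then 1 else 0))"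

definition mutually_unbiased :: "nat \<Rightarrow> (nat \<Rightarrow> complex vec) \<Rightarrow> (nat \<Rightarrow> complex vec) \<Rightarrow> bool" where
  "mutually_unbiased d b c \<longleftrightarrow> (\<forall>j<d. \<forall>k<d. (cmod (b j \<bullet>c c k))^2 = 1 / real d)"

end

theory Submission
  imports Defs
begin

(* For each basis, H(M^A M^B) = H(M^A) + H(M^B) - I(M^A : M^B), and the outcome distribution of
   M^A (resp. M^B) is that of measuring the reduced state rho_A (resp. rho_B) in M.  The entropic
   uncertainty relation for a complete set of d + 1 mutually unbiased bases,
   sum_i H(M_i) \<ge> (d + 1) (log (d + 1) - 1), bounds both marginal sums.  It follows from the
   collision bound H \<ge> - log (sum_j p_j^2), concavity of log, and sum_{i,j} p_ij^2 \<le> 1 + tr R^2 \<le> 2,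
   a Bessel-type inequality for the rank-one projections onto the basis vectors in Hilbert-Schmidt
   space.  Finally, ECQC bounds the sum of all d + 1 classical mutual informations minus the largest
   one by I(A:B).  Primality of d is used only through d > 0. *)

lemma sum_minus_Max_le_Min_sum_subsets:
  fixes f :: "'a \<Rightarrow> real"
  assumes I: "finite I" "card I = Suc n"
  shows "(\<Sum>i\<in>I. f i) - Max (f ` I) \<le> Min {(\<Sum>i\<in>S. f i) | S. S \<subseteq> I \<and> card S = n}"
proof -
  have subsets: "{(\<Sum>i\<in>S. f i) | S. S \<subseteq> I \<and> card S = n} = (\<lambda>S. \<Sum>i\<in>S. f i) ` {S. S \<subseteq> I \<and> card S = n}"
    by blast
  obtain k where "k \<in> I"
    using I by (metis card_eq_SucD insertI1)
  then have "I - {k} \<in> {S. S \<subseteq> I \<and> card S = n}"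
    using I by auto
  moreover have "(\<Sum>i\<in>I. f i) - Max (f ` I) \<le> (\<Sum>i\<in>S. f i)" if S: "S \<subseteq> I" "card S = n" for S
  proof -
    have "card (I - S) = 1"
      using S I by (simp add: card_Diff_subset finite_subset)
    then obtain k where k: "I - S = {k}"
      by (rule card_1_singletonE)
    have "(\<Sum>i\<in>I. f i) = f k + (\<Sum>i\<in>S. f i)"
      using sum.subset_diff[OF S(1) I(1), of f] k by simp
    moreover have "f k \<le> Max (f ` I)"
      using I k by (intro Max_ge) auto
    ultimately show ?thesis by simp
  qed
  ultimately show ?thesis
    unfolding subsets using I by (subst Min_ge_iff) (auto intro: finite_subset[of _ "Pow I"])
qed

lemma sum_lessThan_mult_split:
  fixes f :: "nat \<Rightarrow> 'a::comm_monoid_add"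
  shows "(\<Sum>n<m*d. f n) = (\<Sum>a<m. \<Sum>c<d. f (a*d+c))"
proof -
  have "sum f {a*d..<a*d+d} = (\<Sum>c<d. f (a*d+c))" for a
    using sum.shift_bounds_nat_ivl[of f 0 "a*d" d] by (simp add: add.commute atLeast0LessThan)
  then show ?thesis by (simp flip: sum.nat_group)
qed

lemma sum_swap_nested4:
  "(\<Sum>k\<in>K. \<Sum>a\<in>A. \<Sum>b\<in>B. \<Sum>c\<in>C. \<Sum>e\<in>E. f k a b c e) =
   (\<Sum>a\<in>A. \<Sum>b\<in>B. \<Sum>c\<in>C. \<Sum>e\<in>E. \<Sum>k\<in>K. f k a b c e)"
  by (simp only: sum.swap[of _ K])

section \<open>Quadratic forms and the Hilbert-Schmidt norm\<close>

lemma cscalar_prod_expand: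
  "w \<in> carrier_vec n \<Longrightarrow> v \<bullet>c w = (\<Sum>i<n. v $ i * cnj (w $ i))"
  by (auto simp: scalar_prod_def atLeast0LessThan)

lemma cscalar_prod_mult_mat_vec_expand:
  assumes "A \<in> carrier_mat n n" "u \<in> carrier_vec n"
  shows "(A *\<^sub>v u) \<bullet>c u = (\<Sum>a<n. \<Sum>b<n. cnj (u$a) * A$$(a,b) * u$b)"
  using assms
  by (auto simp: cscalar_prod_expand scalar_prod_def atLeast0LessThan sum_distrib_left sum_distrib_right
      mult.commute mult.left_commute intro!: sum.cong)

lemma mat_adjoint_eq_iff:
  assumes "A \<in> carrier_mat n n"
  shows "mat_adjoint A = A \<longleftrightarrow> (\<forall>i<n. \<forall>j<n. A $$ (i,j) = cnj (A $$ (j,i)))"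
proof -
  have entry: "mat_adjoint A $$ (i,j) = cnj (A $$ (j,i))" if "i < n" "j < n" for i j
    using assms that by (simp add: mat_adjoint_def mat_of_rows_index)
  have dims: "dim_row (mat_adjoint A) = n" "dim_col (mat_adjoint A) = n"
    using assms by (simp_all add: mat_adjoint_def)
  show ?thesis
  proof
    assume "mat_adjoint A = A"
    with entry show "\<forall>i<n. \<forall>j<n. A $$ (i,j) = cnj (A $$ (j,i))"
      by metis
  next
    assume herm: "\<forall>i<n. \<forall>j<n. A $$ (i,j) = cnj (A $$ (j,i))"
    show "mat_adjoint A = A"
    proof (rule eq_matI)
      fix i j assume "i < dim_row A" "j < dim_col A"
      then have ij: "i < n" "j < n" using assms by auto
      show "mat_adjoint A $$ (i,j) = A $$ (i,j)"
        by (simp only: entry[OF ij] herm[rule_format, OF ij])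
    qed (use dims assms in auto)
  qed
qed

lemma orthonormal_basis_unit_vec: "orthonormal_basis d (unit_vec d)"
  unfolding orthonormal_basis_def by (auto simp: cscalar_prod_expand sum.delta)

lemma orthonormal_basis_completeness:
  assumes ob: "orthonormal_basis d b" and "a < d" "a' < d"
  shows "(\<Sum>j<d. b j $ a * cnj (b j $ a')) = (if a = a' then 1 else 0)"
proof -
  define U where "U = mat d d (\<lambda>(a,j). b j $ a)"
  define V where "V = mat d d (\<lambda>(j,a). cnj (b j $ a))"
  have U: "U \<in> carrier_mat d d" and V: "V \<in> carrier_mat d d" unfolding U_def V_def by auto
  have "V * U = 1\<^sub>m d"
  proof (rule eq_matI)
    fix j k assume "j < dim_row (1\<^sub>m d :: complex mat)" "k < dim_col (1\<^sub>m d :: complex mat)"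
    then have jk: "j < d" "k < d" by auto
    have "(V * U) $$ (j,k) = (\<Sum>a<d. b k $ a * cnj (b j $ a))"
      using jk unfolding U_def V_def
      by (auto simp: scalar_prod_def atLeast0LessThan mult.commute intro!: sum.cong)
    also have "\<dots> = b k \<bullet>c b j"
      using ob jk unfolding orthonormal_basis_def by (subst cscalar_prod_expand[of _ d]) auto
    also have "\<dots> = 1\<^sub>m d $$ (j,k)" using ob jk unfolding orthonormal_basis_def by auto
    finally show "(V * U) $$ (j,k) = 1\<^sub>m d $$ (j,k)" .
  qed (auto simp: U_def V_def)
  then have "U * V = 1\<^sub>m d" using mat_mult_left_right_inverse[OF V U] by auto
  then have "(U * V) $$ (a,a') = 1\<^sub>m d $$ (a,a')" by simp
  then show ?thesis
    using assms unfolding U_def V_def by (auto simp: scalar_prod_def atLeast0LessThan)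
qed

lemma sum_expectation_orthonormal_basis:
  assumes R: "R \<in> carrier_mat d d" and ob: "orthonormal_basis d b"
  shows "(\<Sum>j<d. (R *\<^sub>v b j) \<bullet>c b j) = (\<Sum>a<d. R $$ (a,a))"
proof -
  have "(\<Sum>j<d. (R *\<^sub>v b j) \<bullet>c b j) = (\<Sum>j<d. \<Sum>a<d. \<Sum>a'<d. R $$ (a,a') * (b j $ a' * cnj (b j $ a)))"
    using ob by (intro sum.cong refl) (simp add: cscalar_prod_mult_mat_vec_expand[OF R] orthonormal_basis_def mult_ac)
  also have "\<dots> = (\<Sum>a<d. \<Sum>a'<d. \<Sum>j<d. R $$ (a,a') * (b j $ a' * cnj (b j $ a)))"
    by (subst sum.swap) (rule sum.cong[OF refl], rule sum.swap)
  also have "\<dots> = (\<Sum>a<d. \<Sum>a'<d. if a' = a then R $$ (a,a') else 0)"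
    by (intro sum.cong refl) (simp add: sum_distrib_left[symmetric] orthonormal_basis_completeness[OF ob])
  also have "\<dots> = (\<Sum>a<d. R $$ (a,a))"
    by (simp add: sum.delta)
  finally show ?thesis .
qed

lemma expectation_two_point:
  fixes R :: "complex mat" and \<alpha> \<beta> :: complex
  assumes R: "R \<in> carrier_mat d d" and "a < d" "b < d"
  defines "u \<equiv> vec d (\<lambda>c. (if c = a then \<alpha> else 0) + (if c = b then \<beta> else 0))"
  shows "(R *\<^sub>v u) \<bullet>c u =
    cnj \<alpha> * (R $$ (a,a) * \<alpha> + R $$ (a,b) * \<beta>) + cnj \<beta> * (R $$ (b,a) * \<alpha> + R $$ (b,b) * \<beta>)"
proof -
  have u: "u $ c = (if c = a then \<alpha> else 0) + (if c = b then \<beta> else 0)" if "c < d" for c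
    using that by (simp add: u_def)
  have inner: "(\<Sum>c'<d. R $$ (c,c') * u $ c') = R $$ (c,a) * \<alpha> + R $$ (c,b) * \<beta>" for c
  proof -
    have "(\<Sum>c'<d. R $$ (c,c') * u $ c') =
        (\<Sum>c'<d. (if c' = a then R $$ (c,a) * \<alpha> else 0) + (if c' = b then R $$ (c,b) * \<beta> else 0))"
      by (intro sum.cong refl) (auto simp: u distrib_left)
    then show ?thesis using assms by (simp add: sum.distrib)
  qed
  have "(R *\<^sub>v u) \<bullet>c u = (\<Sum>c<d. cnj (u $ c) * (\<Sum>c'<d. R $$ (c,c') * u $ c'))"
    by (simp add: u_def cscalar_prod_mult_mat_vec_expand[OF R] sum_distrib_left mult.assoc)
  also have "\<dots> = (\<Sum>c<d. (if c = a then cnj \<alpha> * (R $$ (a,a) * \<alpha> + R $$ (a,b) * \<beta>) else 0)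
      + (if c = b then cnj \<beta> * (R $$ (b,a) * \<alpha> + R $$ (b,b) * \<beta>) else 0))"
    unfolding inner by (intro sum.cong refl) (auto simp: u distrib_right)
  also have "\<dots> = cnj \<alpha> * (R $$ (a,a) * \<alpha> + R $$ (a,b) * \<beta>) + cnj \<beta> * (R $$ (b,a) * \<alpha> + R $$ (b,b) * \<beta>)"
    using assms by (simp add: sum.distrib)
  finally show ?thesis .
qed

lemma expectation_minus_scaled_identity:
  fixes R :: "complex mat"
  assumes R: "R \<in> carrier_mat d d" and u: "u \<in> carrier_vec d"
  shows "((R - c \<cdot>\<^sub>m 1\<^sub>m d) *\<^sub>v u) \<bullet>c u = (R *\<^sub>v u) \<bullet>c u - c * (u \<bullet>c u)"
proof -
  have "((R - c \<cdot>\<^sub>m 1\<^sub>m d) *\<^sub>v u) \<bullet>c u =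
      (\<Sum>a<d. \<Sum>b<d. cnj (u$a) * R$$(a,b) * u$b - (if b = a then c * (u$a * cnj (u$a)) else 0))"
    using R u by (subst cscalar_prod_mult_mat_vec_expand[of _ d]) (auto intro!: sum.cong simp: algebra_simps)
  also have "\<dots> = (R *\<^sub>v u) \<bullet>c u - c * (u \<bullet>c u)"
    by (simp only: cscalar_prod_mult_mat_vec_expand[OF R u])
      (simp add: sum_subtractf cscalar_prod_expand[OF u] sum_distrib_left)
  finally show ?thesis .
qed

definition hs_norm_sq :: "complex mat \<Rightarrow> real" where
  "hs_norm_sq A = (\<Sum>i<dim_row A. \<Sum>j<dim_col A. (cmod (A $$ (i,j)))^2)"

lemma hs_norm_sq_minus_scaled_identity:
  fixes R :: "complex mat"
  assumes R: "R \<in> carrier_mat d d"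
  shows "hs_norm_sq (R - of_real c \<cdot>\<^sub>m 1\<^sub>m d) = hs_norm_sq R - 2 * c * Re (\<Sum>a<d. R $$ (a,a)) + d * c^2"
proof -
  have "(cmod (z - of_real c))^2 = (cmod z)^2 - (2 * c * Re z - c^2)" for z
    unfolding cmod_power2 by (simp add: power2_eq_square algebra_simps)
  then have "hs_norm_sq (R - of_real c \<cdot>\<^sub>m 1\<^sub>m d) =
      (\<Sum>a<d. \<Sum>b<d. (cmod (R $$ (a,b)))^2 - (if b = a then 2 * c * Re (R $$ (a,a)) - c^2 else 0))"
    using R unfolding hs_norm_sq_def by (intro sum.cong) auto
  then show ?thesis
    using R by (simp add: hs_norm_sq_def sum_subtractf sum_distrib_left)
qed

definition proj_sum :: "nat \<Rightarrow> 'p set \<Rightarrow> ('p \<Rightarrow> real) \<Rightarrow> ('p \<Rightarrow> complex vec) \<Rightarrow> complex mat" where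
  "proj_sum d K y v = mat d d (\<lambda>(a,b). \<Sum>p\<in>K. of_real (y p) * (v p $ a * cnj (v p $ b)))"

lemma hs_inner_proj_sum:
  assumes X: "X \<in> carrier_mat d d" and v: "\<And>p. p \<in> K \<Longrightarrow> v p \<in> carrier_vec d"
  shows "(\<Sum>a<d. \<Sum>b<d. X $$ (a,b) * cnj (proj_sum d K y v $$ (a,b))) =
    (\<Sum>p\<in>K. of_real (y p) * ((X *\<^sub>v v p) \<bullet>c v p))"
proof -
  have "(\<Sum>a<d. \<Sum>b<d. X $$ (a,b) * cnj (proj_sum d K y v $$ (a,b))) =
      (\<Sum>a<d. \<Sum>b<d. \<Sum>p\<in>K. of_real (y p) * (cnj (v p $ a) * X $$ (a,b) * v p $ b))"
    by (intro sum.cong refl) (simp add: proj_sum_def cnj_sum sum_distrib_left mult_ac)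
  also have "\<dots> = (\<Sum>p\<in>K. \<Sum>a<d. \<Sum>b<d. of_real (y p) * (cnj (v p $ a) * X $$ (a,b) * v p $ b))"
    by (simp only: sum.swap[where B = K])
  also have "\<dots> = (\<Sum>p\<in>K. of_real (y p) * ((X *\<^sub>v v p) \<bullet>c v p))"
    by (intro sum.cong refl) (simp add: cscalar_prod_mult_mat_vec_expand[OF X v] sum_distrib_left)
  finally show ?thesis .
qed

lemma expectation_proj_sum:
  assumes u: "u \<in> carrier_vec d"
  shows "(proj_sum d K y v *\<^sub>v u) \<bullet>c u = of_real (\<Sum>p\<in>K. y p * (cmod (v p \<bullet>c u))^2)"
proof -
  have "(proj_sum d K y v *\<^sub>v u) \<bullet>c u =
      (\<Sum>a<d. \<Sum>b<d. \<Sum>p\<in>K. of_real (y p) * ((v p $ a * cnj (u $ a)) * (cnj (v p $ b) * u $ b)))"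
    by (subst cscalar_prod_mult_mat_vec_expand[of _ d])
      (auto simp: proj_sum_def u sum_distrib_left sum_distrib_right mult_ac intro!: sum.cong)
  also have "\<dots> = (\<Sum>p\<in>K. of_real (y p) * ((\<Sum>a<d. v p $ a * cnj (u $ a)) * (\<Sum>b<d. cnj (v p $ b) * u $ b)))"
    by (simp only: sum.swap[where B = K]) (unfold sum_product, simp add: sum_distrib_left)
  also have "\<dots> = of_real (\<Sum>p\<in>K. y p * (cmod (v p \<bullet>c u))^2)"
  proof -
    have "(\<Sum>a<d. v p $ a * cnj (u $ a)) * (\<Sum>b<d. cnj (v p $ b) * u $ b) = of_real ((cmod (v p \<bullet>c u))^2)" for p
      unfolding complex_norm_square by (simp add: cscalar_prod_expand[OF u] cnj_sum)
    then show ?thesis by simp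
  qed
  finally show ?thesis .
qed

(* Expand 0 \<le> ||W - Y||^2 in Hilbert-Schmidt norm for Y = proj_sum d K y v, the operator
   sum of y p |v p><v p|: the hypotheses make both <W, Y> and ||Y||^2 equal to the sum of (y p)^2. *)
lemma sum_sq_le_hs_norm_sq:
  fixes y :: "'p \<Rightarrow> real"
  assumes W: "W \<in> carrier_mat d d" and v: "\<And>p. p \<in> K \<Longrightarrow> v p \<in> carrier_vec d"
    and expect: "\<And>p. p \<in> K \<Longrightarrow> (W *\<^sub>v v p) \<bullet>c v p = of_real (y p)"
    and fixed: "\<And>q. q \<in> K \<Longrightarrow> (\<Sum>p\<in>K. y p * (cmod (v p \<bullet>c v q))^2) = y q"
  shows "(\<Sum>p\<in>K. (y p)^2) \<le> hs_norm_sq W"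
proof -
  define Y where "Y = proj_sum d K y v"
  have Y: "Y \<in> carrier_mat d d"
    by (simp add: Y_def proj_sum_def)
  have "(\<Sum>a<d. \<Sum>b<d. W $$ (a,b) * cnj (Y $$ (a,b))) = (\<Sum>p\<in>K. of_real (y p) * ((W *\<^sub>v v p) \<bullet>c v p))"
    unfolding Y_def by (rule hs_inner_proj_sum[OF W v])
  also have "\<dots> = of_real (\<Sum>p\<in>K. (y p)^2)"
    by (simp add: expect power2_eq_square)
  finally have WY: "(\<Sum>a<d. \<Sum>b<d. W $$ (a,b) * cnj (Y $$ (a,b))) = of_real (\<Sum>p\<in>K. (y p)^2)" .
  have "(\<Sum>a<d. \<Sum>b<d. Y $$ (a,b) * cnj (Y $$ (a,b))) = (\<Sum>p\<in>K. of_real (y p) * ((Y *\<^sub>v v p) \<bullet>c v p))"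
    unfolding Y_def by (rule hs_inner_proj_sum[OF Y[unfolded Y_def] v])
  also have "\<dots> = (\<Sum>p\<in>K. of_real (y p) * of_real (y p))"
    by (intro sum.cong refl) (simp add: Y_def expectation_proj_sum v fixed)
  also have "\<dots> = of_real (\<Sum>p\<in>K. (y p)^2)"
    by (simp add: power2_eq_square)
  finally have YY: "(\<Sum>a<d. \<Sum>b<d. Y $$ (a,b) * cnj (Y $$ (a,b))) = of_real (\<Sum>p\<in>K. (y p)^2)" .
  have norm_diff: "(cmod (w - z))^2 = (cmod w)^2 - 2 * Re (w * cnj z) + Re (z * cnj z)" for w z :: complex
    unfolding cmod_power2 by (simp add: power2_eq_square algebra_simps)
  have "0 \<le> (\<Sum>a<d. \<Sum>b<d. (cmod (W $$ (a,b) - Y $$ (a,b)))^2)"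
    by (intro sum_nonneg) simp
  also have "\<dots> = hs_norm_sq W - 2 * Re (\<Sum>a<d. \<Sum>b<d. W $$ (a,b) * cnj (Y $$ (a,b)))
      + Re (\<Sum>a<d. \<Sum>b<d. Y $$ (a,b) * cnj (Y $$ (a,b)))"
    using W by (simp add: norm_diff hs_norm_sq_def sum_subtractf sum.distrib sum_distrib_left)
  also have "\<dots> = hs_norm_sq W - (\<Sum>p\<in>K. (y p)^2)"
    unfolding WY YY by simp
  finally show ?thesis by simp
qed

section \<open>Density matrices\<close>

lemma density_matrix_diag:
  assumes R: "density_matrix d R" and a: "a < d"
  shows "R $$ (a,a) = of_real (Re (R $$ (a,a)))" and "Re (R $$ (a,a)) \<ge> 0"
proof -
  have car: "R \<in> carrier_mat d d"
    and psd: "\<And>v. v \<in> carrier_vec d \<Longrightarrow> Im ((R *\<^sub>v v) \<bullet>c v) = 0 \<and> Re ((R *\<^sub>v v) \<bullet>c v) \<ge> 0"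
    using R unfolding density_matrix_def by auto
  define u where "u = vec d (\<lambda>c. (if c = a then 1 else 0) + (if c = a then 0 else 0 :: complex))"
  have "(R *\<^sub>v u) \<bullet>c u = R $$ (a,a)"
    using expectation_two_point[OF car a a, of 1 0] by (simp add: u_def)
  then have "Im (R $$ (a,a)) = 0 \<and> Re (R $$ (a,a)) \<ge> 0"
    using psd[of u] by (simp add: u_def)
  then show "R $$ (a,a) = of_real (Re (R $$ (a,a)))" and "Re (R $$ (a,a)) \<ge> 0"
    by (simp_all add: complex_eq_iff)
qed

lemma density_matrix_entry_norm_sq_le:
  assumes R: "density_matrix d R" and ab: "a < d" "b < d"
  shows "(cmod (R $$ (a,b)))^2 \<le> Re (R $$ (a,a)) * Re (R $$ (b,b))"
proof -
  have car: "R \<in> carrier_mat d d"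
    and psd: "\<And>v. v \<in> carrier_vec d \<Longrightarrow> Re ((R *\<^sub>v v) \<bullet>c v) \<ge> 0"
    using R unfolding density_matrix_def by auto
  define A B z where "A = Re (R $$ (a,a))" and "B = Re (R $$ (b,b))" and "z = R $$ (a,b)"
  have "R $$ (b,a) = cnj z"
    using R ab unfolding z_def density_matrix_def mat_adjoint_eq_iff[OF car] by blast
  then have q: "0 \<le> Re (cnj \<alpha> * (of_real A * \<alpha> + z * \<beta>) + cnj \<beta> * (cnj z * \<alpha> + of_real B * \<beta>))" for \<alpha> \<beta>
    using psd[of "vec d (\<lambda>c. (if c = a then \<alpha> else 0) + (if c = b then \<beta> else 0))"]
    by (simp add: expectation_two_point[OF car ab] z_def A_def B_def
        flip: density_matrix_diag(1)[OF R ab(1)] density_matrix_diag(1)[OF R ab(2)])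
  show ?thesis
  proof (cases "B > 0")
    case True
    have "0 \<le> Re (cnj (of_real B) * (of_real A * of_real B + z * - cnj z)
        + cnj (- cnj z) * (cnj z * of_real B + of_real B * - cnj z))"
      by (rule q)
    also have "\<dots> = B * (A * B - (cmod z)^2)"
      unfolding cmod_power2 by (simp add: algebra_simps power2_eq_square)
    finally show ?thesis
      using True by (simp add: zero_le_mult_iff A_def B_def z_def)
  next
    case False
    then have B0: "B = 0"
      using density_matrix_diag(2)[OF R ab(2)] by (simp add: B_def)
    \<comment> \<open>With no weight on \<open>b\<close>, a large multiple of \<open>- cnj z\<close> there would make the form negative.\<close>
    have "z = 0"
    proof (rule ccontr)
      assume "z \<noteq> 0"
      then have z2: "(cmod z)^2 > 0" by simp
      define t where "t = (A + 1) / (2 * (cmod z)^2)"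
      have "0 \<le> Re (cnj 1 * (of_real A * 1 + z * (- of_real t * cnj z))
          + cnj (- of_real t * cnj z) * (cnj z * 1 + of_real B * (- of_real t * cnj z)))"
        by (rule q)
      also have "\<dots> = A - 2 * t * (cmod z)^2"
        using B0 unfolding cmod_power2 by (simp add: algebra_simps power2_eq_square)
      also have "\<dots> = -1"
        using z2 by (simp add: t_def field_simps)
      finally show False by simp
    qed
    then show ?thesis
      using B0 by (simp add: z_def B_def)
  qed
qed

lemma density_matrix_hs_norm_sq_le:
  assumes R: "density_matrix d R"
  shows "hs_norm_sq R \<le> 1"
proof -
  have car: "R \<in> carrier_mat d d" and tr: "(\<Sum>a<d. R $$ (a,a)) = 1"
    using R unfolding density_matrix_def by auto
  have "hs_norm_sq R = (\<Sum>a<d. \<Sum>b<d. (cmod (R $$ (a,b)))^2)"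
    using car by (simp add: hs_norm_sq_def)
  also have "\<dots> \<le> (\<Sum>a<d. \<Sum>b<d. Re (R $$ (a,a)) * Re (R $$ (b,b)))"
    by (intro sum_mono density_matrix_entry_norm_sq_le[OF R]) auto
  also have "\<dots> = (\<Sum>a<d. Re (R $$ (a,a)))^2"
    by (simp add: sum_product power2_eq_square)
  also have "(\<Sum>a<d. Re (R $$ (a,a))) = 1"
    using arg_cong[OF tr, of Re] by simp
  finally show ?thesis by simp
qed

lemma sum_Re_expectation_orthonormal_basis:
  assumes R: "density_matrix d R" and ob: "orthonormal_basis d b"
  shows "(\<Sum>j<d. Re ((R *\<^sub>v b j) \<bullet>c b j)) = 1"
proof -
  have car: "R \<in> carrier_mat d d" and tr: "(\<Sum>a<d. R $$ (a,a)) = 1"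
    using R unfolding density_matrix_def by auto
  show ?thesis
    using arg_cong[where f = Re, OF sum_expectation_orthonormal_basis[OF car ob]] tr by simp
qed

section \<open>Partial traces and marginal distributions\<close>

lemma tensor_index_less:
  assumes "a < d" "c < d"
  shows "a*d+c < d*(d::nat)"
proof -
  have "a*d+c < Suc a * d" using assms(2) by simp
  also have "\<dots> \<le> d*d" using assms(1) by (intro mult_le_mono1) simp
  finally show ?thesis .
qed

lemma cscalar_prod_tensor_vec_expand:
  assumes "\<rho> \<in> carrier_mat (d*d) (d*d)"
  shows "(\<rho> *\<^sub>v tensor_vec d u w) \<bullet>c tensor_vec d u w =
    (\<Sum>a<d. \<Sum>c<d. \<Sum>a'<d. \<Sum>c'<d.
       cnj (u$a) * cnj (w$c) * \<rho> $$ (a*d+c, a'*d+c') * u$a' * w$c')"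
  using assms
  by (simp add: cscalar_prod_mult_mat_vec_expand tensor_vec_def sum_lessThan_mult_split
      tensor_index_less ac_simps)

lemma sum_tensor_vec_orthonormal_basis_right:
  assumes \<rho>: "\<rho> \<in> carrier_mat (d*d) (d*d)" and ob: "orthonormal_basis d b" and u: "u \<in> carrier_vec d"
  shows "(\<Sum>k<d. (\<rho> *\<^sub>v tensor_vec d u (b k)) \<bullet>c tensor_vec d u (b k)) = (ptrace_B d \<rho> *\<^sub>v u) \<bullet>c u"
proof -
  have "(\<Sum>k<d. (\<rho> *\<^sub>v tensor_vec d u (b k)) \<bullet>c tensor_vec d u (b k)) =
      (\<Sum>k<d. \<Sum>a<d. \<Sum>c<d. \<Sum>a'<d. \<Sum>c'<d.
         (cnj (u$a) * \<rho> $$ (a*d+c, a'*d+c') * u$a') * (b k $ c' * cnj (b k $ c)))"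
    unfolding cscalar_prod_tensor_vec_expand[OF \<rho>] by (intro sum.cong refl) (simp add: mult_ac)
  also have "\<dots> = (\<Sum>a<d. \<Sum>c<d. \<Sum>a'<d. \<Sum>c'<d. \<Sum>k<d.
         (cnj (u$a) * \<rho> $$ (a*d+c, a'*d+c') * u$a') * (b k $ c' * cnj (b k $ c)))"
    by (rule sum_swap_nested4)
  also have "\<dots> = (\<Sum>a<d. \<Sum>c<d. \<Sum>a'<d. \<Sum>c'<d.
      (cnj (u$a) * \<rho> $$ (a*d+c, a'*d+c') * u$a') * (if c' = c then 1 else 0))"
    by (intro sum.cong refl) (simp add: sum_distrib_left[symmetric] orthonormal_basis_completeness[OF ob])
  also have "\<dots> = (\<Sum>a<d. \<Sum>c<d. \<Sum>a'<d. cnj (u$a) * \<rho> $$ (a*d+c, a'*d+c) * u$a')"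
    by (intro sum.cong refl) (simp add: if_distrib cong: if_cong)
  also have "\<dots> = (\<Sum>a<d. \<Sum>a'<d. \<Sum>c<d. cnj (u$a) * \<rho> $$ (a*d+c, a'*d+c) * u$a')"
    by (rule sum.cong[OF refl], rule sum.swap)
  also have "\<dots> = (\<Sum>a<d. \<Sum>a'<d. cnj (u$a) * ptrace_B d \<rho> $$ (a,a') * u$a')"
    by (intro sum.cong refl) (simp add: ptrace_B_def sum_distrib_left sum_distrib_right)
  also have "\<dots> = (ptrace_B d \<rho> *\<^sub>v u) \<bullet>c u"
    by (rule cscalar_prod_mult_mat_vec_expand[symmetric]) (simp_all add: ptrace_B_def u)
  finally show ?thesis .
qed

lemma sum_tensor_vec_orthonormal_basis_left:
  assumes \<rho>: "\<rho> \<in> carrier_mat (d*d) (d*d)" and ob: "orthonormal_basis d b" and u: "u \<in> carrier_vec d"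
  shows "(\<Sum>j<d. (\<rho> *\<^sub>v tensor_vec d (b j) u) \<bullet>c tensor_vec d (b j) u) = (ptrace_A d \<rho> *\<^sub>v u) \<bullet>c u"
proof -
  have "(\<Sum>j<d. (\<rho> *\<^sub>v tensor_vec d (b j) u) \<bullet>c tensor_vec d (b j) u) =
      (\<Sum>j<d. \<Sum>a<d. \<Sum>c<d. \<Sum>a'<d. \<Sum>c'<d.
         (cnj (u$c) * \<rho> $$ (a*d+c, a'*d+c') * u$c') * (b j $ a' * cnj (b j $ a)))"
    unfolding cscalar_prod_tensor_vec_expand[OF \<rho>] by (intro sum.cong refl) (simp add: mult_ac)
  also have "\<dots> = (\<Sum>a<d. \<Sum>c<d. \<Sum>a'<d. \<Sum>c'<d. \<Sum>j<d.
         (cnj (u$c) * \<rho> $$ (a*d+c, a'*d+c') * u$c') * (b j $ a' * cnj (b j $ a)))"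
    by (rule sum_swap_nested4)
  also have "\<dots> = (\<Sum>a<d. \<Sum>c<d. \<Sum>a'<d. \<Sum>c'<d.
      (if a' = a then cnj (u$c) * \<rho> $$ (a*d+c, a*d+c') * u$c' else 0))"
    by (intro sum.cong refl) (simp add: sum_distrib_left[symmetric] orthonormal_basis_completeness[OF ob])
  also have "\<dots> = (\<Sum>a<d. \<Sum>c<d. \<Sum>c'<d. \<Sum>a'<d.
      (if a' = a then cnj (u$c) * \<rho> $$ (a*d+c, a*d+c') * u$c' else 0))"
    by (rule sum.cong[OF refl], rule sum.cong[OF refl], rule sum.swap)
  also have "\<dots> = (\<Sum>a<d. \<Sum>c<d. \<Sum>c'<d. cnj (u$c) * \<rho> $$ (a*d+c, a*d+c') * u$c')"
    by (intro sum.cong refl) (simp add: sum.delta)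
  also have "\<dots> = (\<Sum>c<d. \<Sum>c'<d. \<Sum>a<d. cnj (u$c) * \<rho> $$ (a*d+c, a*d+c') * u$c')"
    by (subst sum.swap) (rule sum.cong[OF refl], rule sum.swap)
  also have "\<dots> = (\<Sum>c<d. \<Sum>c'<d. cnj (u$c) * ptrace_A d \<rho> $$ (c,c') * u$c')"
    by (intro sum.cong refl) (simp add: ptrace_A_def sum_distrib_left sum_distrib_right)
  also have "\<dots> = (ptrace_A d \<rho> *\<^sub>v u) \<bullet>c u"
    by (rule cscalar_prod_mult_mat_vec_expand[symmetric]) (simp_all add: ptrace_A_def u)
  finally show ?thesis .
qed

lemma density_matrix_ptrace_B:
  assumes \<rho>: "density_matrix (d*d) \<rho>"
  shows "density_matrix d (ptrace_B d \<rho>)"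
proof -
  have car: "\<rho> \<in> carrier_mat (d*d) (d*d)" and tr: "(\<Sum>n<d*d. \<rho> $$ (n,n)) = 1"
    and psd: "\<And>v. v \<in> carrier_vec (d*d) \<Longrightarrow> Im ((\<rho> *\<^sub>v v) \<bullet>c v) = 0 \<and> Re ((\<rho> *\<^sub>v v) \<bullet>c v) \<ge> 0"
    using \<rho> unfolding density_matrix_def by auto
  have herm: "\<And>m n. m < d*d \<Longrightarrow> n < d*d \<Longrightarrow> \<rho> $$ (m,n) = cnj (\<rho> $$ (n,m))"
    using \<rho> unfolding density_matrix_def mat_adjoint_eq_iff[OF car] by blast
  have pcar: "ptrace_B d \<rho> \<in> carrier_mat d d"
    by (simp add: ptrace_B_def)
  moreover have "mat_adjoint (ptrace_B d \<rho>) = ptrace_B d \<rho>"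
    unfolding mat_adjoint_eq_iff[OF pcar]
    by (simp add: ptrace_B_def cnj_sum) (intro allI impI sum.cong refl herm tensor_index_less; simp)
  moreover have "(\<Sum>a<d. ptrace_B d \<rho> $$ (a,a)) = 1"
    using tr by (simp add: ptrace_B_def sum_lessThan_mult_split)
  moreover have "Im ((ptrace_B d \<rho> *\<^sub>v v) \<bullet>c v) = 0 \<and> Re ((ptrace_B d \<rho> *\<^sub>v v) \<bullet>c v) \<ge> 0"
    if v: "v \<in> carrier_vec d" for v
  proof -
    define t where "t k = tensor_vec d v (unit_vec d k)" for k
    have "(ptrace_B d \<rho> *\<^sub>v v) \<bullet>c v = (\<Sum>k<d. (\<rho> *\<^sub>v t k) \<bullet>c t k)"
      unfolding t_def by (rule sum_tensor_vec_orthonormal_basis_right[OF car orthonormal_basis_unit_vec v, symmetric])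
    moreover have "t k \<in> carrier_vec (d*d)" for k
      unfolding t_def tensor_vec_def by simp
    ultimately show ?thesis
      using psd by (simp add: sum_nonneg)
  qed
  ultimately show ?thesis
    unfolding density_matrix_def by blast
qed

lemma density_matrix_ptrace_A:
  assumes \<rho>: "density_matrix (d*d) \<rho>"
  shows "density_matrix d (ptrace_A d \<rho>)"
proof -
  have car: "\<rho> \<in> carrier_mat (d*d) (d*d)" and tr: "(\<Sum>n<d*d. \<rho> $$ (n,n)) = 1"
    and psd: "\<And>v. v \<in> carrier_vec (d*d) \<Longrightarrow> Im ((\<rho> *\<^sub>v v) \<bullet>c v) = 0 \<and> Re ((\<rho> *\<^sub>v v) \<bullet>c v) \<ge> 0"
    using \<rho> unfolding density_matrix_def by auto
  have herm: "\<And>m n. m < d*d \<Longrightarrow> n < d*d \<Longrightarrow> \<rho> $$ (m,n) = cnj (\<rho> $$ (n,m))"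
    using \<rho> unfolding density_matrix_def mat_adjoint_eq_iff[OF car] by blast
  have pcar: "ptrace_A d \<rho> \<in> carrier_mat d d"
    by (simp add: ptrace_A_def)
  moreover have "mat_adjoint (ptrace_A d \<rho>) = ptrace_A d \<rho>"
    unfolding mat_adjoint_eq_iff[OF pcar]
    by (simp add: ptrace_A_def cnj_sum) (intro allI impI sum.cong refl herm tensor_index_less; simp)
  moreover have "(\<Sum>c<d. ptrace_A d \<rho> $$ (c,c)) = 1"
  proof -
    have "(\<Sum>c<d. ptrace_A d \<rho> $$ (c,c)) = (\<Sum>c<d. \<Sum>a<d. \<rho> $$ (a*d+c, a*d+c))"
      by (simp add: ptrace_A_def)
    also have "\<dots> = (\<Sum>a<d. \<Sum>c<d. \<rho> $$ (a*d+c, a*d+c))"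
      by (rule sum.swap)
    finally show ?thesis
      using tr by (simp add: sum_lessThan_mult_split)
  qed
  moreover have "Im ((ptrace_A d \<rho> *\<^sub>v v) \<bullet>c v) = 0 \<and> Re ((ptrace_A d \<rho> *\<^sub>v v) \<bullet>c v) \<ge> 0"
    if v: "v \<in> carrier_vec d" for v
  proof -
    define t where "t a = tensor_vec d (unit_vec d a) v" for a
    have "(ptrace_A d \<rho> *\<^sub>v v) \<bullet>c v = (\<Sum>a<d. (\<rho> *\<^sub>v t a) \<bullet>c t a)"
      unfolding t_def by (rule sum_tensor_vec_orthonormal_basis_left[OF car orthonormal_basis_unit_vec v, symmetric])
    moreover have "t a \<in> carrier_vec (d*d)" for a
      unfolding t_def tensor_vec_def by simp
    ultimately show ?thesis
      using psd by (simp add: sum_nonneg)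
  qed
  ultimately show ?thesis
    unfolding density_matrix_def by blast
qed

definition meas_entropy :: "nat \<Rightarrow> complex mat \<Rightarrow> (nat \<Rightarrow> complex vec) \<Rightarrow> real" where
  "meas_entropy d R b = (\<Sum>j<d. ent (Re ((R *\<^sub>v b j) \<bullet>c b j)))"

lemma meas_entropy_A_eq:
  assumes \<rho>: "\<rho> \<in> carrier_mat (d*d) (d*d)" and ob: "orthonormal_basis d b"
  shows "meas_entropy_A d \<rho> b = meas_entropy d (ptrace_B d \<rho>) b"
proof -
  have "(\<Sum>k<d. meas_prob d \<rho> b j k) = Re ((ptrace_B d \<rho> *\<^sub>v b j) \<bullet>c b j)" if "j < d" for j
  proof -
    have "b j \<in> carrier_vec d" using ob that by (simp add: orthonormal_basis_def)
    then show ?thesis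
      by (simp add: meas_prob_def flip: sum_tensor_vec_orthonormal_basis_right[OF \<rho> ob])
  qed
  then show ?thesis
    unfolding meas_entropy_A_def meas_entropy_def by simp
qed

lemma meas_entropy_B_eq:
  assumes \<rho>: "\<rho> \<in> carrier_mat (d*d) (d*d)" and ob: "orthonormal_basis d b"
  shows "meas_entropy_B d \<rho> b = meas_entropy d (ptrace_A d \<rho>) b"
proof -
  have "(\<Sum>j<d. meas_prob d \<rho> b j k) = Re ((ptrace_A d \<rho> *\<^sub>v b k) \<bullet>c b k)" if "k < d" for k
  proof -
    have "b k \<in> carrier_vec d" using ob that by (simp add: orthonormal_basis_def)
    then show ?thesis
      by (simp add: meas_prob_def flip: sum_tensor_vec_orthonormal_basis_left[OF \<rho> ob])
  qed
  then show ?thesis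
    unfolding meas_entropy_B_def meas_entropy_def by simp
qed

section \<open>Entropic uncertainty for mutually unbiased bases\<close>

lemma ent_sum_ge_neg_log_sum_sq:
  fixes q :: "'a \<Rightarrow> real"
  assumes fin: "finite J" and nn: "\<And>j. j \<in> J \<Longrightarrow> q j \<ge> 0" and s1: "(\<Sum>j\<in>J. q j) = 1"
  shows "(\<Sum>j\<in>J. q j ^ 2) > 0" and "(\<Sum>j\<in>J. ent (q j)) \<ge> - log 2 (\<Sum>j\<in>J. q j ^ 2)"
proof -
  define c where "c = (\<Sum>j\<in>J. q j ^ 2)"
  have "c \<noteq> 0"
  proof
    assume "c = 0"
    then have "\<forall>j\<in>J. q j ^ 2 = 0"
      unfolding c_def using fin by (subst (asm) sum_nonneg_eq_0_iff) auto
    then show False using s1 by simp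
  qed
  moreover have "c \<ge> 0"
    unfolding c_def by (intro sum_nonneg) simp
  ultimately have c: "c > 0" by simp
  then show "(\<Sum>j\<in>J. q j ^ 2) > 0" unfolding c_def .
  define h where "h j = (if q j > 0 then q j * ln (q j) else 0)" for j
  \<comment> \<open>Gibbs' inequality against the distribution proportional to \<open>q\<^sup>2\<close>: \<open>ln x \<le> x - 1\<close> at \<open>x = q j / c\<close>.\<close>
  have h: "h j - q j * ln c \<le> q j ^ 2 / c - q j" if j: "j \<in> J" for j
  proof (cases "q j > 0")
    case True
    have "ln (q j) - ln c \<le> q j / c - 1"
      using ln_le_minus_one[of "q j / c"] True c by (simp add: ln_div)
    then have "q j * (ln (q j) - ln c) \<le> q j * (q j / c - 1)"
      using True by (intro mult_left_mono) auto
    then show ?thesis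
      unfolding h_def using True by (simp add: algebra_simps power2_eq_square)
  next
    case False
    then show ?thesis
      using nn[OF j] by (simp add: h_def)
  qed
  have "(\<Sum>j\<in>J. h j - q j * ln c) \<le> (\<Sum>j\<in>J. q j ^ 2 / c - q j)"
    by (intro sum_mono h)
  also have "\<dots> = 0"
    using s1 c by (simp add: sum_subtractf sum_divide_distrib[symmetric] c_def)
  finally have "(\<Sum>j\<in>J. h j) \<le> ln c"
    using s1 by (simp add: sum_subtractf sum_distrib_right[symmetric])
  moreover have "ent (q j) = - h j / ln 2" for j
    unfolding ent_def h_def log_def by auto
  then have "(\<Sum>j\<in>J. ent (q j)) = - (\<Sum>j\<in>J. h j) / ln 2"
    by (simp add: sum_divide_distrib[symmetric] sum_negf)
  ultimately show "(\<Sum>j\<in>J. ent (q j)) \<ge> - log 2 (\<Sum>j\<in>J. q j ^ 2)"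
    unfolding c_def log_def by (simp add: divide_right_mono)
qed

lemma sum_neg_log_ge:
  fixes c :: "'a \<Rightarrow> real"
  assumes fin: "finite I" and ne: "I \<noteq> {}" and pos: "\<And>i. i \<in> I \<Longrightarrow> c i > 0"
  shows "(\<Sum>i\<in>I. - log 2 (c i)) \<ge> - real (card I) * log 2 ((\<Sum>i\<in>I. c i) / card I)"
proof -
  define m where "m = (\<Sum>i\<in>I. c i) / card I"
  have n: "card I > 0"
    using fin ne by (simp add: card_gt_0_iff)
  have s: "(\<Sum>i\<in>I. c i) > 0"
    using fin ne pos by (intro sum_pos) auto
  then have m: "m > 0"
    unfolding m_def using n by simp
  have "ln (c i) - ln m \<le> c i / m - 1" if "i \<in> I" for i
    using ln_le_minus_one[of "c i / m"] pos[OF that] m by (simp add: ln_div)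
  then have "(\<Sum>i\<in>I. ln (c i) - ln m) \<le> (\<Sum>i\<in>I. c i / m - 1)"
    by (intro sum_mono)
  also have "\<dots> = (\<Sum>i\<in>I. c i) / m - card I"
    by (simp add: sum_subtractf sum_divide_distrib)
  also have "\<dots> = 0"
    using s n unfolding m_def by (simp add: field_simps)
  finally have "(\<Sum>i\<in>I. ln (c i)) / ln 2 \<le> card I * ln m / ln 2"
    by (simp add: sum_subtractf divide_right_mono)
  then show ?thesis
    unfolding m_def[symmetric] log_def by (simp add: sum_negf sum_divide_distrib[symmetric])
qed

lemma mub_sum_overlap_sq:
  fixes M :: "'i \<Rightarrow> nat \<Rightarrow> complex vec" and y :: "'i \<times> nat \<Rightarrow> real"
  assumes I: "finite I"
    and ob: "\<And>i. i \<in> I \<Longrightarrow> orthonormal_basis d (M i)"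
    and mu: "\<And>i i'. i \<in> I \<Longrightarrow> i' \<in> I \<Longrightarrow> i \<noteq> i' \<Longrightarrow> mutually_unbiased d (M i) (M i')"
    and ysum: "\<And>i. i \<in> I \<Longrightarrow> (\<Sum>j<d. y (i,j)) = 0"
    and ij: "i \<in> I" "j < d"
  shows "(\<Sum>i'\<in>I. \<Sum>j'<d. y (i',j') * (cmod (M i' j' \<bullet>c M i j))^2) = y (i,j)"
proof -
  have overlap: "(cmod (M i' j' \<bullet>c M i j))^2 = (if i' = i then (if j' = j then 1 else 0) else 1 / d)"
    if "i' \<in> I" "j' < d" for i' j'
    using that ij ob mu by (auto simp: orthonormal_basis_def mutually_unbiased_def)
  have "(\<Sum>i'\<in>I. \<Sum>j'<d. y (i',j') * (cmod (M i' j' \<bullet>c M i j))^2) =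
      (\<Sum>i'\<in>I. \<Sum>j'<d. y (i',j') * (if i' = i then (if j' = j then 1 else 0) else 1 / d))"
    by (intro sum.cong refl) (simp add: overlap)
  also have "\<dots> = (\<Sum>i'\<in>I. if i' = i then y (i,j) else 0)"
  proof (intro sum.cong refl)
    fix i' assume i': "i' \<in> I"
    show "(\<Sum>j'<d. y (i',j') * (if i' = i then (if j' = j then 1 else 0) else 1 / d)) =
        (if i' = i then y (i,j) else 0)"
    proof (cases "i' = i")
      case True
      have "y (i',j') * (if j' = j then 1 else 0) = (if j' = j then y (i,j) else 0)" for j'
        using True by simp
      then show ?thesis
        using True ij by simp
    next
      case False
      then show ?thesis
        using ysum[OF i'] by (simp flip: sum_divide_distrib)
    qed
  qed
  also have "\<dots> = y (i,j)"
    using I ij by simp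
  finally show ?thesis .
qed

(* sum_sq_le_hs_norm_sq for W = R - I/d and the centred probabilities p - 1/d. *)
lemma mub_sum_sq_expectation_le:
  fixes M :: "'i \<Rightarrow> nat \<Rightarrow> complex vec"
  assumes R: "density_matrix d R" and d: "d > 0" and I: "finite I"
    and ob: "\<And>i. i \<in> I \<Longrightarrow> orthonormal_basis d (M i)"
    and mu: "\<And>i i'. i \<in> I \<Longrightarrow> i' \<in> I \<Longrightarrow> i \<noteq> i' \<Longrightarrow> mutually_unbiased d (M i) (M i')"
  shows "(\<Sum>i\<in>I. \<Sum>j<d. (Re ((R *\<^sub>v M i j) \<bullet>c M i j))^2) \<le> 1 + (real (card I) - 1) / d"
proof -
  have car: "R \<in> carrier_mat d d" and tr: "(\<Sum>a<d. R $$ (a,a)) = 1"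
    and real: "\<And>u. u \<in> carrier_vec d \<Longrightarrow> Im ((R *\<^sub>v u) \<bullet>c u) = 0"
    using R unfolding density_matrix_def by auto
  define K where "K = I \<times> {..<d}"
  define v where "v q = M (fst q) (snd q)" for q
  define p where "p q = Re ((R *\<^sub>v v q) \<bullet>c v q)" for q
  define y where "y q = p q - 1 / d" for q
  define W where "W = R - of_real (1 / d) \<cdot>\<^sub>m 1\<^sub>m d"
  have sum_K: "(\<Sum>q\<in>K. f q) = (\<Sum>i\<in>I. \<Sum>j<d. f (i,j))" for f :: "'i \<times> nat \<Rightarrow> real"
    unfolding K_def by (simp add: sum.cartesian_product)
  have v: "v q \<in> carrier_vec d" if "q \<in> K" for q
    using ob that by (auto simp: K_def v_def orthonormal_basis_def)
  have ysum: "(\<Sum>j<d. y (i,j)) = 0" if "i \<in> I" for i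
    using sum_Re_expectation_orthonormal_basis[OF R ob[OF that]] d
    by (simp add: y_def p_def v_def sum_subtractf)
  have fixed: "(\<Sum>q'\<in>K. y q' * (cmod (v q' \<bullet>c v q))^2) = y q" if q: "q \<in> K" for q
  proof -
    obtain i j where "q = (i,j)" "i \<in> I" "j < d"
      using q by (auto simp: K_def)
    then show ?thesis
      unfolding sum_K using mub_sum_overlap_sq[OF I ob mu ysum] by (simp add: v_def)
  qed
  have expect: "(W *\<^sub>v v q) \<bullet>c v q = of_real (y q)" if q: "q \<in> K" for q
  proof -
    have "v q \<bullet>c v q = 1"
      using ob q by (auto simp: K_def v_def orthonormal_basis_def)
    moreover have "(R *\<^sub>v v q) \<bullet>c v q = of_real (p q)"
      using real[OF v[OF q]] by (simp add: p_def complex_eq_iff)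
    ultimately show ?thesis
      by (simp add: W_def expectation_minus_scaled_identity[OF car v[OF q]] y_def)
  qed
  have "(\<Sum>q\<in>K. (y q)^2) \<le> hs_norm_sq W"
    by (rule sum_sq_le_hs_norm_sq[OF _ v expect fixed]) (simp add: W_def minus_carrier_mat)
  also have "\<dots> = hs_norm_sq R - 1 / d"
    unfolding W_def hs_norm_sq_minus_scaled_identity[OF car] using d tr by (simp add: power2_eq_square)
  also have "\<dots> \<le> 1 - 1 / d"
    using density_matrix_hs_norm_sq_le[OF R] by simp
  finally have ysq: "(\<Sum>q\<in>K. (y q)^2) \<le> 1 - 1 / d" .
  have "(\<Sum>i\<in>I. \<Sum>j<d. (Re ((R *\<^sub>v M i j) \<bullet>c M i j))^2) = (\<Sum>q\<in>K. (y q + 1 / d)^2)"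
    by (simp add: sum_K y_def p_def v_def)
  also have "\<dots> = (\<Sum>q\<in>K. (y q)^2) + 2 / d * (\<Sum>q\<in>K. y q) + card K / d^2"
    by (simp add: power2_sum sum.distrib sum_distrib_left sum_distrib_right sum_divide_distrib power_divide mult_ac)
  also have "\<dots> = (\<Sum>q\<in>K. (y q)^2) + card I / d"
  proof -
    have "(\<Sum>q\<in>K. y q) = 0"
      unfolding sum_K using ysum by simp
    moreover have "card K = card I * d"
      by (simp add: K_def card_cartesian_product)
    ultimately show ?thesis
      using d by (simp add: power2_eq_square)
  qed
  finally show ?thesis
    using ysq d by (simp add: diff_divide_distrib)
qed

lemma mub_entropic_uncertainty:
  fixes M :: "'i \<Rightarrow> nat \<Rightarrow> complex vec"
  assumes R: "density_matrix d R" and d: "d > 0" and I: "finite I" "card I = d + 1"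
    and ob: "\<And>i. i \<in> I \<Longrightarrow> orthonormal_basis d (M i)"
    and mu: "\<And>i i'. i \<in> I \<Longrightarrow> i' \<in> I \<Longrightarrow> i \<noteq> i' \<Longrightarrow> mutually_unbiased d (M i) (M i')"
  shows "(\<Sum>i\<in>I. meas_entropy d R (M i)) \<ge> (real d + 1) * (log 2 (real d + 1) - 1)"
proof -
  define p where "p i j = Re ((R *\<^sub>v M i j) \<bullet>c M i j)" for i j
  define c where "c i = (\<Sum>j<d. (p i j)^2)" for i
  have psd: "\<And>u. u \<in> carrier_vec d \<Longrightarrow> Re ((R *\<^sub>v u) \<bullet>c u) \<ge> 0"
    using R unfolding density_matrix_def by auto
  have c: "c i > 0 \<and> meas_entropy d R (M i) \<ge> - log 2 (c i)" if i: "i \<in> I" for i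
    using ent_sum_ge_neg_log_sum_sq[of "{..<d}" "p i"] psd ob[OF i]
      sum_Re_expectation_orthonormal_basis[OF R ob[OF i]]
    by (auto simp: c_def p_def meas_entropy_def orthonormal_basis_def)
  have csum: "(\<Sum>i\<in>I. c i) \<le> 2"
    using mub_sum_sq_expectation_le[OF R d I(1) ob mu] d by (simp add: c_def p_def I(2))
  have "(real d + 1) * (log 2 (real d + 1) - 1) = - real (card I) * log 2 (2 / card I)"
    using I(2) by (simp add: log_divide algebra_simps)
  also have "\<dots> \<le> - real (card I) * log 2 ((\<Sum>i\<in>I. c i) / card I)"
  proof -
    have "(\<Sum>i\<in>I. c i) > 0"
      using c I by (intro sum_pos) auto
    then have "log 2 ((\<Sum>i\<in>I. c i) / card I) \<le> log 2 (2 / card I)"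
      using csum I by (subst log_le_cancel_iff) (auto simp: divide_right_mono)
    then show ?thesis
      by (simp add: mult_left_mono)
  qed
  also have "\<dots> \<le> (\<Sum>i\<in>I. - log 2 (c i))"
    using c I by (intro sum_neg_log_ge) auto
  also have "\<dots> \<le> (\<Sum>i\<in>I. meas_entropy d R (M i))"
    using c by (intro sum_mono) auto
  finally show ?thesis .
qed

lemma marginal_entropic_uncertainty:
  fixes M :: "'i \<Rightarrow> nat \<Rightarrow> complex vec"
  assumes \<rho>: "density_matrix (d*d) \<rho>" and d: "d > 0" and I: "finite I" "card I = d + 1"
    and ob: "\<And>i. i \<in> I \<Longrightarrow> orthonormal_basis d (M i)"
    and mu: "\<And>i i'. i \<in> I \<Longrightarrow> i' \<in> I \<Longrightarrow> i \<noteq> i' \<Longrightarrow> mutually_unbiased d (M i) (M i')"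
  shows "(\<Sum>i\<in>I. meas_entropy_A d \<rho> (M i)) \<ge> (real d + 1) * (log 2 (real d + 1) - 1)"
    and "(\<Sum>i\<in>I. meas_entropy_B d \<rho> (M i)) \<ge> (real d + 1) * (log 2 (real d + 1) - 1)"
proof -
  have car: "\<rho> \<in> carrier_mat (d*d) (d*d)"
    using \<rho> by (simp add: density_matrix_def)
  have "(\<Sum>i\<in>I. meas_entropy_A d \<rho> (M i)) = (\<Sum>i\<in>I. meas_entropy d (ptrace_B d \<rho>) (M i))"
    by (intro sum.cong refl) (simp add: meas_entropy_A_eq[OF car ob])
  then show "(\<Sum>i\<in>I. meas_entropy_A d \<rho> (M i)) \<ge> (real d + 1) * (log 2 (real d + 1) - 1)"
    using mub_entropic_uncertainty[OF density_matrix_ptrace_B[OF \<rho>] d I ob mu] by simp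
  have "(\<Sum>i\<in>I. meas_entropy_B d \<rho> (M i)) = (\<Sum>i\<in>I. meas_entropy d (ptrace_A d \<rho>) (M i))"
    by (intro sum.cong refl) (simp add: meas_entropy_B_eq[OF car ob])
  then show "(\<Sum>i\<in>I. meas_entropy_B d \<rho> (M i)) \<ge> (real d + 1) * (log 2 (real d + 1) - 1)"
    using mub_entropic_uncertainty[OF density_matrix_ptrace_A[OF \<rho>] d I ob mu] by simp
qed

theorem proposition2:
  fixes d :: nat and M :: "nat \<Rightarrow> nat \<Rightarrow> complex vec" and \<rho> :: "complex mat"
  assumes "prime d"
    and "\<forall>i\<in>{1..d+1}. orthonormal_basis d (M i)"
    and "\<forall>i\<in>{1..d+1}. \<forall>i'\<in>{1..d+1}. i \<noteq> i' \<longrightarrow> mutually_unbiased d (M i) (M i')"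
    and ECQC: "\<forall>\<sigma>. density_matrix (d*d) \<sigma> \<longrightarrow>
       qmi d \<sigma> \<ge> Min {(\<Sum>i\<in>S. classical_mi d \<sigma> (M i)) | S. S \<subseteq> {1..d+1} \<and> card S = d}"
    and "density_matrix (d*d) \<rho>"
  shows "(\<Sum>i=1..d+1. joint_meas_entropy d \<rho> (M i)) \<ge>
     2 * ((real d + 1) * (log 2 (real d) - 1)) - qmi d \<rho>
       - Max {classical_mi d \<rho> (M i) | i. i \<in> {1..d+1}}"
proof -
  let ?I = "{1..d+1}"
  have d: "d > 0"
    using assms(1) by (simp add: prime_gt_0_nat)
  have ob: "\<And>i. i \<in> ?I \<Longrightarrow> orthonormal_basis d (M i)"
    and mu: "\<And>i i'. i \<in> ?I \<Longrightarrow> i' \<in> ?I \<Longrightarrow> i \<noteq> i' \<Longrightarrow> mutually_unbiased d (M i) (M i')"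
    using assms(2,3) by blast+
  have I: "finite ?I" "card ?I = d + 1"
    by simp_all
  have "(real d + 1) * (log 2 (real d) - 1) \<le> (real d + 1) * (log 2 (real d + 1) - 1)"
    using d by simp
  moreover have "(real d + 1) * (log 2 (real d + 1) - 1) \<le> (\<Sum>i\<in>?I. meas_entropy_A d \<rho> (M i))"
    and "(real d + 1) * (log 2 (real d + 1) - 1) \<le> (\<Sum>i\<in>?I. meas_entropy_B d \<rho> (M i))"
    using marginal_entropic_uncertainty[OF assms(5) d I ob mu] by simp_all
  moreover have "(\<Sum>i\<in>?I. classical_mi d \<rho> (M i)) - Max ((\<lambda>i. classical_mi d \<rho> (M i)) ` ?I)
      \<le> Min {(\<Sum>i\<in>S. classical_mi d \<rho> (M i)) | S. S \<subseteq> ?I \<and> card S = d}"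
    by (rule sum_minus_Max_le_Min_sum_subsets) simp_all
  moreover have "Min {(\<Sum>i\<in>S. classical_mi d \<rho> (M i)) | S. S \<subseteq> ?I \<and> card S = d} \<le> qmi d \<rho>"
    using ECQC assms(5) by blast
  moreover have "Max {classical_mi d \<rho> (M i) | i. i \<in> ?I} = Max ((\<lambda>i. classical_mi d \<rho> (M i)) ` ?I)"
    by (rule arg_cong[where f = Max]) blast
  moreover have "(\<Sum>i\<in>?I. joint_meas_entropy d \<rho> (M i)) = (\<Sum>i\<in>?I. meas_entropy_A d \<rho> (M i))
      + (\<Sum>i\<in>?I. meas_entropy_B d \<rho> (M i)) - (\<Sum>i\<in>?I. classical_mi d \<rho> (M i))"
    by (simp add: classical_mi_def sum.distrib sum_subtractf)
  ultimately show ?thesis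
    by linarith
qed

end
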